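(* Let $0<\mu<L_{\max}^{-1}$ with $L_{\max}=\max_i\|A_i\|_2^2$, and let $\{x^n\}$ be generated by GAITA (as in the context) from an arbitrary $x^0\in\mathbf{R}^N$. Then $\{x^n\}$ is bounded, for every $n\in\mathbf{N}$ $$\sum_{k=0}^n\|x^{k+1}-x^k\|_2^2\leq\frac{2\mu}{1-\mu L_{\max}}T_\lambda(x^0),$$ and $\|x^n-x^{n+1}\|_2\to0$ as $n\to\infty$.
   Context: Let $A\in\mathbf{R}^{m\times N}$ have columns $A_1,\dots,A_N$, $y\in\mathbf{R}^m$, $\lambda>0$, $q\in(0,1)$, and $T_\lambda(x)=\frac12\|Ax-y\|_2^2+\lambda\sum_{i=1}^N|x_i|^q$. For a step size $\mu>0$ set $\tau_{\mu,q}=\frac{2-q}{2-2q}(2\lambda\mu(1-q))^{\frac{1}{2-q}}$ and $\eta_{\mu,q}=(2\lambda\mu(1-q))^{\frac{1}{2-q}}$. For $z\in\mathbf{R}$ let $prox_{\mu,\lambda|\cdot|^q}(z)=\arg\min_{v\in\mathbf{R}}\{\frac{(z-v)^2}{2\mu}+\lambda|v|^q\}$ (a single point when $|z|\neq\tau_{\mu,q}$). Define $\mathcal{T}(z,w)$ as the unique element of $prox_{\mu,\lambda|\cdot|^q}(z)$ if $|z|\neq\tau_{\mu,q}$, and, if $|z|=\tau_{\mu,q}$, as $sgn(z)\eta_{\mu,q}$ when $w\neq0$ and $0$ when $w=0$ ($sgn(0)=0$). GAITA: given $x^0\in\mathbf{R}^N$, for $n=0,1,2,\dots$ let $i=(n\bmod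 N)+1$, $z_i^n=x_i^n-\mu A_i^T(Ax^n-y)$, $x_i^{n+1}=\mathcal{T}(z_i^n,x_i^n)$, $x_j^{n+1}=x_j^n$ for $j\neq i$. *)

theory Defs
  imports "HOL-Analysis.Analysis"
begin

text \<open>Vectors in R^N are functions nat => real, with only indices 0..<N relevant
  (0-based: component j corresponds to the paper's j+1). The m x N matrix A is
  a function nat => nat => real with A i j the (i,j) entry, i < m, j < N.\<close>

definition matvec :: "nat \<Rightarrow> nat \<Rightarrow> (nat \<Rightarrow> nat \<Rightarrow> real) \<Rightarrow> (nat \<Rightarrow> real) \<Rightarrow> nat \<Rightarrow> real" where
  "matvec m N A x = (\<lambda>i. \<Sum>j<N. A i j * x j)"

definition Tlam :: "nat \<Rightarrow> nat \<Rightarrow> (nat \<Rightarrow> nat \<Rightarrow> real) \<Rightarrow> (nat \<Rightarrow> real) \<Rightarrow> real \<Rightarrow> real \<Rightarrow> (nat \<Rightarrow> real) \<Rightarrow> real" where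
  "Tlam m N A y lam q x =
     (1/2) * (\<Sum>i<m. (matvec m N A x i - y i)\<^sup>2) + lam * (\<Sum>j<N. \<bar>x j\<bar> powr q)"

definition colnorm2 :: "nat \<Rightarrow> (nat \<Rightarrow> nat \<Rightarrow> real) \<Rightarrow> nat \<Rightarrow> real" where
  "colnorm2 m A j = (\<Sum>i<m. (A i j)\<^sup>2)"

definition Lmax :: "nat \<Rightarrow> nat \<Rightarrow> (nat \<Rightarrow> nat \<Rightarrow> real) \<Rightarrow> real" where
  "Lmax m N A = Max (colnorm2 m A ` {..<N})"

definition tau :: "real \<Rightarrow> real \<Rightarrow> real \<Rightarrow> real" where
  "tau mu lam q = (2 - q) / (2 - 2*q) * (2*lam*mu*(1 - q)) powr (1 / (2 - q))"

definition eta :: "real \<Rightarrow> real \<Rightarrow> real \<Rightarrow> real" where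
  "eta mu lam q = (2*lam*mu*(1 - q)) powr (1 / (2 - q))"

definition proxset :: "real \<Rightarrow> real \<Rightarrow> real \<Rightarrow> real \<Rightarrow> real set" where
  "proxset mu lam q z = {v. \<forall>u. (z - v)\<^sup>2 / (2*mu) + lam * \<bar>v\<bar> powr q
                               \<le> (z - u)\<^sup>2 / (2*mu) + lam * \<bar>u\<bar> powr q}"

definition Tmap :: "real \<Rightarrow> real \<Rightarrow> real \<Rightarrow> real \<Rightarrow> real \<Rightarrow> real" where
  "Tmap mu lam q z w =
     (if \<bar>z\<bar> \<noteq> tau mu lam q then (THE v. v \<in> proxset mu lam q z)
      else if w \<noteq> 0 then sgn z * eta mu lam q else 0)"

primrec gaita :: "nat \<Rightarrow> nat \<Rightarrow> (nat \<Rightarrow> nat \<Rightarrow> real) \<Rightarrow> (nat \<Rightarrow> real) \<Rightarrow> real \<Rightarrow> real \<Rightarrow> real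
                   \<Rightarrow> (nat \<Rightarrow> real) \<Rightarrow> nat \<Rightarrow> (nat \<Rightarrow> real)" where
  "gaita m N A y lam q mu x0 0 = x0"
| "gaita m N A y lam q mu x0 (Suc n) =
     (let x = gaita m N A y lam q mu x0 n;
          i = n mod N;
          z = x i - mu * (\<Sum>k<m. A k i * (matvec m N A x k - y k))
      in x(i := Tmap mu lam q z (x i)))"

end

theory Submission
  imports Defs
begin

text \<open>Updating coordinate \<open>i\<close> of \<open>x\<close> to \<open>v = x\<^sub>i + d\<close> changes \<open>T\<^sub>\<lambda>\<close> by exactly
  \<open>d g + d\<^sup>2 \<parallel>A\<^sub>i\<parallel>\<^sup>2 / 2 + \<lambda> (|v|\<^sup>q - |x\<^sub>i|\<^sup>q)\<close> with \<open>g = A\<^sub>i\<^sup>T (Ax - y)\<close>. If \<open>v\<close> minimises the scalar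
  prox objective at \<open>z = x\<^sub>i - \<mu> g\<close>, comparing with the competitor \<open>x\<^sub>i\<close> gives
  \<open>d g + d\<^sup>2/(2\<mu>) + \<lambda> (|v|\<^sup>q - |x\<^sub>i|\<^sup>q) \<le> 0\<close>, so every GAITA step lowers \<open>T\<^sub>\<lambda>\<close> by at least
  \<open>(1 - \<mu> L\<^sub>m\<^sub>a\<^sub>x)/(2\<mu>) d\<^sup>2\<close>. Telescoping gives the bound on the partial sums and hence
  \<open>x\<^sup>n - x\<^sup>n\<^sup>+\<^sup>1 \<rightarrow> 0\<close>; monotonicity of \<open>T\<^sub>\<lambda>\<close> and \<open>\<lambda> |x\<^sub>j|\<^sup>q \<le> T\<^sub>\<lambda>(x)\<close> give boundedness.

  The real work is to show that the update \<open>Tmap \<mu> \<lambda> q z w\<close> is a minimiser at all, i.e. that the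
  scalar problem has a unique minimiser unless \<open>|z| = \<tau>\<close>, where \<open>0\<close> and \<open>sgn z \<eta>\<close> tie.
  A positive minimiser satisfies the stationarity equation \<open>z = v + \<lambda>\<mu>q v\<^sup>q\<^sup>-\<^sup>1\<close> and is at
  least \<open>\<eta>\<close>; on \<open>[\<eta>, \<infinity>)\<close> the right-hand side is strictly increasing, by the tangent-line
  inequality for the convex function \<open>v\<^sup>q\<^sup>-\<^sup>1\<close>.\<close>

lemma one_plus_mult_le_powr_nonpos:
  fixes x p :: real
  assumes "0 < x" "p \<le> 0"
  shows "1 + p * (x - 1) \<le> x powr p"
proof -
  have "p * (x - 1) \<le> p * ln x"
    using ln_le_minus_one[OF assms(1)] assms(2) by (rule mult_left_mono_neg)
  also have "1 + p * ln x \<le> exp (p * ln x)" by (rule exp_ge_add_one_self)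
  finally show ?thesis using assms(1) by (simp add: powr_def)
qed

lemma powr_ge_tangent_nonpos:
  fixes a b p :: real
  assumes "0 < a" "0 < b" "p \<le> 0"
  shows "a powr p + p * a powr (p - 1) * (b - a) \<le> b powr p"
proof -
  have "a powr p * (1 + p * (b / a - 1)) \<le> a powr p * (b / a) powr p"
    using one_plus_mult_le_powr_nonpos[of "b / a" p] assms by simp
  also have "a powr p * (b / a) powr p = b powr p"
    using assms by (simp add: powr_divide)
  also have "a powr p * (1 + p * (b / a - 1)) = a powr p + p * (a powr p / a) * (b - a)"
    using assms(1) by (simp add: field_simps)
  also have "a powr p / a = a powr (p - 1)"
    using assms(1) by (simp add: powr_diff)
  finally show ?thesis .
qed

definition prox_objective :: "real \<Rightarrow> real \<Rightarrow> real \<Rightarrow> real \<Rightarrow> real \<Rightarrow> real" where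
  "prox_objective mu lam q z v = (z - v)\<^sup>2 / (2*mu) + lam * \<bar>v\<bar> powr q"

lemma proxset_iff:
  "v \<in> proxset mu lam q z \<longleftrightarrow> (\<forall>u. prox_objective mu lam q z v \<le> prox_objective mu lam q z u)"
  by (simp add: proxset_def prox_objective_def)

lemma proxset_nonempty:
  assumes "0 < mu" "0 \<le> lam" "0 < q"
  shows "proxset mu lam q z \<noteq> {}"
proof -
  let ?f = "prox_objective mu lam q z" and ?S = "cball (0::real) (2 * \<bar>z\<bar>)"
  have "continuous_on ?S ?f"
    unfolding prox_objective_def
    by (intro continuous_intros continuous_on_powr') (use assms in auto)
  obtain v where v: "\<forall>u\<in>?S. ?f v \<le> ?f u"
    using continuous_attains_inf[OF compact_cball _ \<open>continuous_on ?S ?f\<close>] by auto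
  have "0 \<in> ?S" by simp
  have "?f v \<le> ?f u" for u
  proof (cases "u \<in> ?S")
    case False
    hence "z\<^sup>2 \<le> (z - u)\<^sup>2"
      by (intro abs_le_square_iff[THEN iffD1]) (auto simp: dist_real_def)
    hence "?f 0 \<le> ?f u"
      using assms by (simp add: prox_objective_def divide_right_mono add_increasing2)
    with v \<open>0 \<in> ?S\<close> show ?thesis by fastforce
  qed (use v in auto)
  hence "v \<in> proxset mu lam q z" by (simp add: proxset_iff)
  thus ?thesis by blast
qed

lemma proxset_uminus: "v \<in> proxset mu lam q z \<Longrightarrow> - v \<in> proxset mu lam q (- z)"
proof -
  have sym: "prox_objective mu lam q (- z) (- u) = prox_objective mu lam q z u" for u
    by (simp add: prox_objective_def power2_commute)
  assume "v \<in> proxset mu lam q z"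
  hence "prox_objective mu lam q (- z) (- v) \<le> prox_objective mu lam q (- z) u" for u
    using sym[of v] sym[of "- u"] by (simp add: proxset_iff)
  thus ?thesis by (simp add: proxset_iff)
qed

lemma proxset_zero:
  assumes "0 < mu" "0 \<le> lam"
  shows "proxset mu lam q 0 = {0}"
proof -
  have "v = 0" if "v \<in> proxset mu lam q 0" for v
  proof -
    have "v\<^sup>2 / (2*mu) + lam * \<bar>v\<bar> powr q \<le> 0"
      using that assms by (auto simp: proxset_iff prox_objective_def dest: spec[of _ 0])
    moreover have "0 \<le> lam * \<bar>v\<bar> powr q" using assms by simp
    ultimately have "v\<^sup>2 / (2*mu) \<le> 0" by linarith
    thus "v = 0" using assms by (simp add: divide_le_0_iff)
  qed
  moreover have "0 \<in> proxset mu lam q 0"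
    using assms by (simp add: proxset_iff prox_objective_def)
  ultimately show ?thesis by blast
qed

lemma proxset_nonneg:
  assumes "0 < mu" "0 < z" "v \<in> proxset mu lam q z"
  shows "0 \<le> v"
proof (rule ccontr)
  assume "\<not> 0 \<le> v"
  hence "(z - (- v))\<^sup>2 < (z - v)\<^sup>2"
    using assms by (simp add: power2_eq_square algebra_simps mult_neg_pos)
  hence "prox_objective mu lam q z (- v) < prox_objective mu lam q z v"
    using assms by (simp add: prox_objective_def divide_strict_right_mono)
  thus False using assms(3) by (auto simp: proxset_iff not_le[symmetric])
qed

lemma proxset_pos_stationary:
  assumes "0 < mu" "0 < v" "v \<in> proxset mu lam q z"
  shows "z = v + lam * mu * q * v powr (q - 1)"
proof -
  let ?f = "\<lambda>u. (z - u)\<^sup>2 / (2*mu) + lam * u powr q"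
  have "(?f has_real_derivative (- (z - v) / mu + lam * (q * v powr (q - 1)))) (at v)"
    using assms by (auto intro!: derivative_eq_intros simp: field_simps power2_eq_square)
  moreover have "\<forall>u. \<bar>v - u\<bar> < v \<longrightarrow> ?f v \<le> ?f u"
  proof (intro allI impI)
    fix u assume "\<bar>v - u\<bar> < v"
    hence "0 < u" by linarith
    thus "?f v \<le> ?f u"
      using assms(2,3) by (simp add: proxset_iff prox_objective_def) (metis abs_of_pos)
  qed
  ultimately have "- (z - v) / mu + lam * (q * v powr (q - 1)) = 0"
    using DERIV_local_min[OF _ assms(2)] by blast
  thus ?thesis using assms(1) by (simp add: field_simps)
qed

lemma prox_objective_minus_at_zero:
  assumes "0 < mu" "0 < v"
  shows "prox_objective mu lam q z v - prox_objective mu lam q z 0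
         = v * (v + 2 * mu * lam * v powr (q - 1) - 2 * z) / (2 * mu)"
proof -
  have "v * v powr (q - 1) = v powr q" using assms(2) by (simp add: powr_mult_base)
  thus ?thesis using assms by (simp add: prox_objective_def field_simps power2_eq_square)
qed

text \<open>Equivalently \<open>\<eta> \<le> v\<close>.\<close>

lemma proxset_pos_lower_bound:
  assumes "0 < mu" "0 < v" "v \<in> proxset mu lam q z"
  shows "2 * lam * mu * (1 - q) * v powr (q - 1) \<le> v"
proof -
  have "prox_objective mu lam q z v - prox_objective mu lam q z 0 \<le> 0"
    using assms(3) by (simp add: proxset_iff)
  hence "v + 2 * mu * lam * v powr (q - 1) \<le> 2 * z"
    using assms(1,2) by (simp add: prox_objective_minus_at_zero mult_le_0_iff divide_le_0_iff)
  thus ?thesis using proxset_pos_stationary[OF assms] by (simp add: algebra_simps)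
qed

lemma eta_pos: "0 < mu \<Longrightarrow> 0 < lam \<Longrightarrow> q < 1 \<Longrightarrow> 0 < eta mu lam q"
  by (simp add: eta_def)

lemma eq_eta_iff:
  assumes "0 < mu" "0 < lam" "q < 1" "0 < v"
  shows "v = eta mu lam q \<longleftrightarrow> 2 * lam * mu * (1 - q) * v powr (q - 1) = v"
proof -
  define K where "K = 2 * lam * mu * (1 - q)"
  have "0 < K" using assms by (simp add: K_def)
  have split: "v powr (q - 1) * v powr (2 - q) = v"
    using assms(4) by (simp flip: powr_add)
  have "K * v powr (q - 1) = v \<longleftrightarrow> K * v powr (q - 1) * v powr (2 - q) = v * v powr (2 - q)"
    using assms(4) by simp
  also have "\<dots> \<longleftrightarrow> v powr (2 - q) = K"
    using assms(4) split by (auto simp: mult.assoc)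
  also have "\<dots> \<longleftrightarrow> v = K powr (1 / (2 - q))"
  proof
    assume "v powr (2 - q) = K"
    thus "v = K powr (1 / (2 - q))" using assms by (auto simp: powr_powr)
  next
    assume "v = K powr (1 / (2 - q))"
    thus "v powr (2 - q) = K" using assms \<open>0 < K\<close> by (simp add: powr_powr)
  qed
  finally show ?thesis by (auto simp: K_def eta_def)
qed

lemma eta_plus_eq_two_tau:
  assumes "0 < mu" "0 < lam" "q < 1"
  shows "eta mu lam q + 2 * mu * lam * eta mu lam q powr (q - 1) = 2 * tau mu lam q"
proof -
  let ?e = "eta mu lam q"
  have "2 * mu * lam * ?e powr (q - 1) = 2 * lam * mu * (1 - q) * ?e powr (q - 1) / (1 - q)"
    using assms(3) by simp
  also have "\<dots> = ?e / (1 - q)"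
    using eq_eta_iff[OF assms eta_pos[OF assms]] by simp
  finally have "?e + 2 * mu * lam * ?e powr (q - 1) = ?e + ?e / (1 - q)" by simp
  also have "\<dots> = 2 * ((2 - q) / (2 - 2 * q) * ?e)"
    using assms(3) by (simp add: field_simps)
  also have "\<dots> = 2 * tau mu lam q"
    by (simp add: tau_def eta_def)
  finally show ?thesis .
qed

lemma proxset_zero_and_pos_imp_tau:
  assumes "0 < mu" "0 < lam" "q < 1" "0 < a"
    and "0 \<in> proxset mu lam q z" "a \<in> proxset mu lam q z"
  shows "z = tau mu lam q"
proof -
  have "prox_objective mu lam q z a = prox_objective mu lam q z 0"
    using assms(5,6) by (meson order_antisym proxset_iff)
  hence tie: "a + 2 * mu * lam * a powr (q - 1) = 2 * z"
    using prox_objective_minus_at_zero[OF assms(1,4), of lam q z] assms(1,4) by simp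
  hence "2 * lam * mu * (1 - q) * a powr (q - 1) = a"
    using proxset_pos_stationary[OF assms(1,4,6)] by (simp add: algebra_simps)
  hence "a = eta mu lam q" using eq_eta_iff[OF assms(1-4)] by simp
  thus ?thesis using tie eta_plus_eq_two_tau[OF assms(1-3)] by simp
qed

lemma proxset_pos_unique:
  assumes "0 < mu" "0 < lam" "0 < q" "q < 1" "0 < a" "0 < b"
    and "a \<in> proxset mu lam q z" "b \<in> proxset mu lam q z"
  shows "a = b"
proof -
  have False if "0 < a" "a < b" "a \<in> proxset mu lam q z" "b \<in> proxset mu lam q z" for a b
  proof -
    define c where "c = lam * mu * q"
    define P where "P = a powr (q - 2)"
    have "0 < P" using that(1) by (simp add: P_def)
    have aP: "a powr (q - 1) = a * P"
      using that(1) powr_mult_base[of a "q - 2"] by (simp add: P_def)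
    have "b - a = c * (a powr (q - 1) - b powr (q - 1))"
      using proxset_pos_stationary[OF assms(1) that(1,3)]
        proxset_pos_stationary[OF assms(1) _ that(4)] that
      by (simp add: c_def algebra_simps)
    also have "\<dots> \<le> c * ((1 - q) * P * (b - a))"
    proof (rule mult_left_mono)
      show "a powr (q - 1) - b powr (q - 1) \<le> (1 - q) * P * (b - a)"
        using powr_ge_tangent_nonpos[of a b "q - 1"] assms(4) that(1,2)
        by (simp add: P_def algebra_simps flip: diff_diff_eq)
    qed (use assms in \<open>simp add: c_def\<close>)
    finally have "1 \<le> c * (1 - q) * P"
      using that(2) by (simp add: mult.commute mult.left_commute)
    have "2 * lam * mu * (1 - q) * P \<le> 1"
      using proxset_pos_lower_bound[OF assms(1) that(1,3)] that(1) by (simp add: aP)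
    have "c * (1 - q) * P = q / 2 * (2 * lam * mu * (1 - q) * P)"
      by (simp add: c_def)
    also have "\<dots> \<le> q / 2"
      using mult_left_mono[OF \<open>2 * lam * mu * (1 - q) * P \<le> 1\<close>, of "q / 2"] assms(3) by simp
    finally show False using \<open>1 \<le> c * (1 - q) * P\<close> assms(4) by linarith
  qed
  thus ?thesis using assms by (metis linorder_neqE_linordered_idom)
qed

lemma tau_pos: "0 < mu \<Longrightarrow> 0 < lam \<Longrightarrow> q < 1 \<Longrightarrow> 0 < tau mu lam q"
  by (simp add: tau_def)

lemma zero_in_proxset_tau:
  assumes "0 < mu" "0 < lam" "q < 1"
  shows "0 \<in> proxset mu lam q (tau mu lam q)"
proof -
  let ?t = "tau mu lam q" and ?e = "eta mu lam q"
  let ?f = "prox_objective mu lam q (tau mu lam q)"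
  have "0 < ?e" using eta_pos[OF assms] .
  have "?f 0 \<le> ?f u" for u
  proof (cases "u \<le> 0")
    case True
    hence "?t\<^sup>2 \<le> (?t - u)\<^sup>2" using tau_pos[OF assms] by (simp add: power_mono)
    thus ?thesis using assms by (simp add: prox_objective_def divide_right_mono add_increasing2)
  next
    case False
    hence "0 < u" by simp
    \<comment> \<open>\<open>u + 2\<mu>\<lambda> u\<^sup>q\<^sup>-\<^sup>1\<close> is convex with a horizontal tangent at \<open>\<eta>\<close>, where it equals \<open>2\<tau>\<close>.\<close>
    have "?e powr (q - 1) = ?e * ?e powr (q - 2)"
      using \<open>0 < ?e\<close> powr_mult_base[of ?e "q - 2"] by simp
    hence curvature: "2 * lam * mu * (1 - q) * ?e powr (q - 2) = 1"
      using eq_eta_iff[OF assms \<open>0 < ?e\<close>] \<open>0 < ?e\<close> by (simp add: mult.commute mult.left_commute)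
    have "?e powr (q - 1) + (q - 1) * ?e powr (q - 2) * (u - ?e) \<le> u powr (q - 1)"
      using powr_ge_tangent_nonpos[of ?e u "q - 1"] \<open>0 < ?e\<close> \<open>0 < u\<close> assms(3)
      by (simp flip: diff_diff_eq)
    hence "2 * mu * lam * (?e powr (q - 1) + (q - 1) * ?e powr (q - 2) * (u - ?e))
        \<le> 2 * mu * lam * u powr (q - 1)"
      using assms by (intro mult_left_mono) auto
    moreover have "2 * mu * lam * ((q - 1) * ?e powr (q - 2) * (u - ?e))
        = - (2 * lam * mu * (1 - q) * ?e powr (q - 2)) * (u - ?e)"
      by (simp add: algebra_simps)
    ultimately have "2 * mu * lam * ?e powr (q - 1) - (u - ?e) \<le> 2 * mu * lam * u powr (q - 1)"
      unfolding curvature by (simp add: distrib_left)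
    hence "2 * ?t \<le> u + 2 * mu * lam * u powr (q - 1)"
      using eta_plus_eq_two_tau[OF assms] by linarith
    hence "0 \<le> ?f u - ?f 0"
      using prox_objective_minus_at_zero[OF assms(1) \<open>0 < u\<close>] \<open>0 < u\<close> assms(1) by simp
    thus ?thesis by simp
  qed
  thus ?thesis by (simp add: proxset_iff)
qed

lemma eta_in_proxset_tau:
  assumes "0 < mu" "0 < lam" "q < 1"
  shows "eta mu lam q \<in> proxset mu lam q (tau mu lam q)"
proof -
  let ?f = "prox_objective mu lam q (tau mu lam q)"
  have "?f (eta mu lam q) = ?f 0"
    using prox_objective_minus_at_zero[OF assms(1) eta_pos[OF assms], of lam q "tau mu lam q"]
      eta_plus_eq_two_tau[OF assms]
    by simp
  thus ?thesis using zero_in_proxset_tau[OF assms] by (simp add: proxset_iff)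
qed

lemma proxset_unique:
  assumes "0 < mu" "0 < lam" "0 < q" "q < 1" "\<bar>z\<bar> \<noteq> tau mu lam q"
    and "a \<in> proxset mu lam q z" "b \<in> proxset mu lam q z"
  shows "a = b"
proof -
  have nonneg_case: "a = b"
    if "0 \<le> z" "z \<noteq> tau mu lam q" "a \<in> proxset mu lam q z" "b \<in> proxset mu lam q z" for z a b
  proof (cases "z = 0")
    case True
    thus ?thesis using that(3,4) proxset_zero[OF assms(1)] assms(2) by simp
  next
    case False
    hence "0 < z" using that(1) by simp
    have pos: "0 < v" if "v \<in> proxset mu lam q z" "v \<noteq> 0" for v
      using proxset_nonneg[OF assms(1) \<open>0 < z\<close> that(1)] that(2) by simp
    have no_tie: "v = 0" if "v \<in> proxset mu lam q z" "0 \<in> proxset mu lam q z" for v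
      using pos[OF that(1)] proxset_zero_and_pos_imp_tau[OF assms(1,2,4) _ that(2,1)] \<open>z \<noteq> tau mu lam q\<close>
      by blast
    show ?thesis
    proof (cases "0 \<in> proxset mu lam q z")
      case True
      thus ?thesis using no_tie that(3,4) by metis
    next
      case False
      hence "a \<noteq> 0" "b \<noteq> 0" using that(3,4) by auto
      thus ?thesis using proxset_pos_unique[OF assms(1-4) pos pos that(3,4)] that(3,4) by simp
    qed
  qed
  show ?thesis
  proof (cases "0 \<le> z")
    case True
    with assms(5-7) show ?thesis by (intro nonneg_case) auto
  next
    case False
    with assms(5-7) have "- a = - b"
      by (intro nonneg_case[of "- z"] proxset_uminus) auto
    thus ?thesis by simp
  qed
qed

lemma Tmap_in_proxset:
  assumes "0 < mu" "0 < lam" "0 < q" "q < 1"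
  shows "Tmap mu lam q z w \<in> proxset mu lam q z"
proof (cases "\<bar>z\<bar> = tau mu lam q")
  case False
  obtain v where "v \<in> proxset mu lam q z"
    using proxset_nonempty[of mu lam q z] assms by fastforce
  hence "\<exists>!v. v \<in> proxset mu lam q z"
    using proxset_unique[OF assms False] by (intro ex1I[of _ v]) blast+
  hence "(THE v. v \<in> proxset mu lam q z) \<in> proxset mu lam q z" by (rule theI')
  thus ?thesis using False by (simp add: Tmap_def)
next
  case True
  note zero = zero_in_proxset_tau[OF assms(1,2,4)] and eta = eta_in_proxset_tau[OF assms(1,2,4)]
  have "0 < tau mu lam q" using tau_pos assms by simp
  show ?thesis
  proof (cases "0 \<le> z")
    case True
    hence "z = tau mu lam q" "0 < z" using \<open>\<bar>z\<bar> = tau mu lam q\<close> \<open>0 < tau mu lam q\<close> by auto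
    thus ?thesis using zero eta by (simp add: Tmap_def)
  next
    case False
    hence "z = - tau mu lam q" "z < 0" using \<open>\<bar>z\<bar> = tau mu lam q\<close> by auto
    thus ?thesis using proxset_uminus[OF zero] proxset_uminus[OF eta] by (simp add: Tmap_def)
  qed
qed

lemma matvec_fun_upd:
  assumes "i < N"
  shows "matvec m N A (x(i := v)) k = matvec m N A x k + A k i * (v - x i)"
proof -
  have "matvec m N A (x(i := v)) k = (\<Sum>j<N. A k j * x j + (if j = i then A k j * (v - x i) else 0))"
    unfolding matvec_def by (intro sum.cong) (auto simp: algebra_simps)
  also have "\<dots> = matvec m N A x k + A k i * (v - x i)"
    using assms by (simp add: sum.distrib matvec_def)
  finally show ?thesis .
qed

lemma sum_fun_upd_eq:
  fixes f :: "'a \<Rightarrow> 'b::ab_group_add"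
  assumes "finite S" "i \<in> S"
  shows "(\<Sum>j\<in>S. f ((x(i := v)) j)) = (\<Sum>j\<in>S. f (x j)) - f (x i) + f v"
proof -
  have "(\<Sum>j\<in>S - {i}. f ((x(i := v)) j)) = (\<Sum>j\<in>S - {i}. f (x j))"
    by (intro sum.cong) auto
  thus ?thesis using sum.remove[OF assms, of "\<lambda>j. f ((x(i := v)) j)"] sum.remove[OF assms, of "\<lambda>j. f (x j)"]
    by (simp add: algebra_simps)
qed

lemma Tlam_fun_upd:
  fixes m N :: nat and A :: "nat \<Rightarrow> nat \<Rightarrow> real" and x y :: "nat \<Rightarrow> real" and v :: real
  assumes "i < N"
  defines "d \<equiv> v - x i" and "g \<equiv> \<Sum>k<m. A k i * (matvec m N A x k - y k)"
  shows "Tlam m N A y lam q (x(i := v))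
    = Tlam m N A y lam q x + d * g + d\<^sup>2 * colnorm2 m A i / 2 + lam * (\<bar>v\<bar> powr q - \<bar>x i\<bar> powr q)"
proof -
  have "(\<Sum>k<m. (matvec m N A (x(i := v)) k - y k)\<^sup>2)
      = (\<Sum>k<m. (matvec m N A x k - y k)\<^sup>2 + 2 * d * (A k i * (matvec m N A x k - y k)) + d\<^sup>2 * (A k i)\<^sup>2)"
    using assms(1) by (intro sum.cong) (simp_all add: matvec_fun_upd d_def power2_eq_square algebra_simps)
  also have "\<dots> = (\<Sum>k<m. (matvec m N A x k - y k)\<^sup>2) + 2 * d * g + d\<^sup>2 * colnorm2 m A i"
    by (simp add: sum.distrib sum_distrib_left g_def colnorm2_def)
  finally have residual: "(\<Sum>k<m. (matvec m N A (x(i := v)) k - y k)\<^sup>2)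
      = (\<Sum>k<m. (matvec m N A x k - y k)\<^sup>2) + 2 * d * g + d\<^sup>2 * colnorm2 m A i" .
  have penalty: "(\<Sum>j<N. \<bar>(x(i := v)) j\<bar> powr q) = (\<Sum>j<N. \<bar>x j\<bar> powr q) - \<bar>x i\<bar> powr q + \<bar>v\<bar> powr q"
    using sum_fun_upd_eq[of "{..<N}" i "\<lambda>t. \<bar>t\<bar> powr q"] assms(1) by simp
  show ?thesis unfolding Tlam_def residual penalty by (simp add: algebra_simps)
qed

lemma prox_coordinate_descent:
  assumes "0 < mu" "i < N" "colnorm2 m A i \<le> L"
    and "v \<in> proxset mu lam q (x i - mu * (\<Sum>k<m. A k i * (matvec m N A x k - y k)))"
  shows "Tlam m N A y lam q (x(i := v)) + (1 - mu * L) / (2 * mu) * (\<Sum>j<N. ((x(i := v)) j - x j)\<^sup>2)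
    \<le> Tlam m N A y lam q x"
proof -
  define g where "g = (\<Sum>k<m. A k i * (matvec m N A x k - y k))"
  define d where "d = v - x i"
  have "prox_objective mu lam q (x i - mu * g) v \<le> prox_objective mu lam q (x i - mu * g) (x i)"
    using assms(4) by (simp add: proxset_iff g_def)
  moreover have "(x i - mu * g - v)\<^sup>2 = (mu * g)\<^sup>2 + 2 * mu * (d * g) + d\<^sup>2"
    by (simp add: d_def power2_eq_square algebra_simps)
  hence "(x i - mu * g - v)\<^sup>2 / (2 * mu) = (mu * g)\<^sup>2 / (2 * mu) + (d * g + d\<^sup>2 / (2 * mu))"
    using assms(1) by (simp add: add_divide_distrib)
  ultimately have model: "d * g + d\<^sup>2 / (2 * mu) + lam * (\<bar>v\<bar> powr q - \<bar>x i\<bar> powr q) \<le> 0"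
    by (simp add: prox_objective_def power2_commute algebra_simps)
  have "(\<Sum>j<N. ((x(i := v)) j - x j)\<^sup>2) = (\<Sum>j<N. if j = i then d\<^sup>2 else 0)"
    by (intro sum.cong) (auto simp: d_def)
  hence moved: "(\<Sum>j<N. ((x(i := v)) j - x j)\<^sup>2) = d\<^sup>2" using assms(2) by simp
  have "d\<^sup>2 * colnorm2 m A i \<le> d\<^sup>2 * L" using assms(3) by (simp add: mult_left_mono)
  moreover have "(1 - mu * L) / (2 * mu) * d\<^sup>2 = d\<^sup>2 / (2 * mu) - d\<^sup>2 * L / 2"
    using assms(1) by (simp add: field_simps)
  ultimately show ?thesis
    unfolding moved Tlam_fun_upd[OF assms(2)] using model by (simp add: g_def d_def)
qed

lemma colnorm2_le_Lmax: "j < N \<Longrightarrow> colnorm2 m A j \<le> Lmax m N A"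
  unfolding Lmax_def by (intro Max_ge) auto

lemma gaita_descent:
  fixes m N :: nat and A :: "nat \<Rightarrow> nat \<Rightarrow> real" and y x0 :: "nat \<Rightarrow> real"
    and lam q mu :: real
  assumes "1 \<le> N" "0 < lam" "0 < q" "q < 1" "0 < mu"
  defines "x \<equiv> gaita m N A y lam q mu x0"
  shows "Tlam m N A y lam q (x (Suc n))
      + (1 - mu * Lmax m N A) / (2 * mu) * (\<Sum>j<N. (x (Suc n) j - x n j)\<^sup>2)
    \<le> Tlam m N A y lam q (x n)"
proof -
  let ?i = "n mod N"
  let ?z = "x n ?i - mu * (\<Sum>k<m. A k ?i * (matvec m N A (x n) k - y k))"
  have "?i < N" using assms(1) by simp
  moreover have "x (Suc n) = (x n)(?i := Tmap mu lam q ?z (x n ?i))"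
    by (simp add: x_def Let_def)
  ultimately show ?thesis
    using prox_coordinate_descent[OF assms(5) _ colnorm2_le_Lmax Tmap_in_proxset[OF assms(5,2,3,4)]]
    by simp
qed

lemma Tlam_nonneg: "0 \<le> lam \<Longrightarrow> 0 \<le> Tlam m N A y lam q x"
  unfolding Tlam_def by (intro add_nonneg_nonneg mult_nonneg_nonneg sum_nonneg) auto

lemma abs_le_Tlam_powr:
  assumes "0 < lam" "0 < q" "j < N"
  shows "\<bar>x j\<bar> \<le> (Tlam m N A y lam q x / lam) powr (1 / q)"
proof -
  have "lam * \<bar>x j\<bar> powr q \<le> lam * (\<Sum>j<N. \<bar>x j\<bar> powr q)"
    using assms by (intro mult_left_mono member_le_sum) auto
  also have "\<dots> \<le> Tlam m N A y lam q x"
    unfolding Tlam_def by (simp add: sum_nonneg)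
  finally have "\<bar>x j\<bar> powr q \<le> Tlam m N A y lam q x / lam"
    using assms(1) by (simp add: le_divide_eq mult.commute)
  hence "(\<bar>x j\<bar> powr q) powr (1 / q) \<le> (Tlam m N A y lam q x / lam) powr (1 / q)"
    using assms by (intro powr_mono2) auto
  thus ?thesis using assms(2) by (simp add: powr_powr)
qed

lemma descent_partial_sums_le:
  fixes T D :: "nat \<Rightarrow> real"
  assumes "0 < c" "\<And>n. 0 \<le> T n" "\<And>n. T (Suc n) + c * D n \<le> T n"
  shows "(\<Sum>k\<le>n. D k) \<le> T 0 / c"
proof -
  have "c * (\<Sum>k\<le>n. D k) \<le> T 0 - T (Suc n)"
  proof (induction n)
    case 0
    show ?case using assms(3)[of 0] by simp
  next
    case (Suc n)
    thus ?case using assms(3)[of "Suc n"] by (simp add: distrib_left)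
  qed
  thus ?thesis using assms(1) assms(2)[of "Suc n"] by (simp add: le_divide_eq mult.commute)
qed

lemma descent_decseq:
  fixes T D :: "nat \<Rightarrow> real"
  assumes "0 \<le> c" "\<And>n. 0 \<le> D n" "\<And>n. T (Suc n) + c * D n \<le> T n"
  shows "decseq T"
proof (rule decseq_SucI)
  fix n
  show "T (Suc n) \<le> T n" using assms(3)[of n] mult_nonneg_nonneg[OF assms(1) assms(2)[of n]] by linarith
qed

lemma descent_tendsto_zero:
  fixes T D :: "nat \<Rightarrow> real"
  assumes "0 < c" "\<And>n. 0 \<le> T n" "\<And>n. 0 \<le> D n" "\<And>n. T (Suc n) + c * D n \<le> T n"
  shows "D \<longlonglongrightarrow> 0"
proof -
  have "summable D"
  proof (rule summableI_nonneg_bounded)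
    fix n
    have "sum D {..<n} \<le> sum D {..n}" using assms(3) by (intro sum_mono2) auto
    also have "\<dots> \<le> T 0 / c" using descent_partial_sums_le[where T = T and D = D, OF assms(1,2,4)] .
    finally show "sum D {..<n} \<le> T 0 / c" .
  qed (use assms(3) in auto)
  thus ?thesis by (rule summable_LIMSEQ_zero)
qed

theorem mainTheorem9:
  fixes m N :: nat and A :: "nat \<Rightarrow> nat \<Rightarrow> real" and y x0 :: "nat \<Rightarrow> real"
    and lam q mu :: real
  assumes "N \<ge> 1"
    and "lam > 0" and "0 < q" and "q < 1"
    and "0 < mu" and "mu * Lmax m N A < 1"
  defines "x \<equiv> gaita m N A y lam q mu x0"
  shows "(\<exists>B. \<forall>n. \<forall>j<N. \<bar>x n j\<bar> \<le> B)
    \<and> (\<forall>n. (\<Sum>k\<le>n. \<Sum>j<N. (x (Suc k) j - x k j)\<^sup>2)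
            \<le> 2 * mu / (1 - mu * Lmax m N A) * Tlam m N A y lam q x0)
    \<and> (\<lambda>n. sqrt (\<Sum>j<N. (x n j - x (Suc n) j)\<^sup>2)) \<longlonglongrightarrow> 0"
proof -
  let ?T = "\<lambda>n. Tlam m N A y lam q (x n)" and ?D = "\<lambda>n. \<Sum>j<N. (x (Suc n) j - x n j)\<^sup>2"
  define c where "c = (1 - mu * Lmax m N A) / (2 * mu)"
  have "0 < c" using assms(5,6) by (simp add: c_def)
  have step: "?T (Suc n) + c * ?D n \<le> ?T n" for n
    using gaita_descent[OF assms(1-5)] by (simp add: x_def c_def)
  have T_nonneg: "0 \<le> ?T n" for n using Tlam_nonneg assms(2) by simp
  have D_nonneg: "0 \<le> ?D n" for n by (simp add: sum_nonneg)
  have T0: "?T 0 = Tlam m N A y lam q x0" by (simp add: x_def)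
  have "\<bar>x n j\<bar> \<le> (Tlam m N A y lam q x0 / lam) powr (1 / q)" if "j < N" for n j
  proof -
    have "?T n \<le> ?T 0"
      using decseqD[OF descent_decseq[where T = ?T and D = ?D, OF _ D_nonneg step]] \<open>0 < c\<close> by simp
    hence "(?T n / lam) powr (1 / q) \<le> (?T 0 / lam) powr (1 / q)"
      using T_nonneg assms(2,3) by (intro powr_mono2 divide_right_mono) auto
    thus ?thesis using abs_le_Tlam_powr[OF assms(2,3) that, of "x n" m A y] T0 by simp
  qed
  moreover have "(\<Sum>k\<le>n. ?D k) \<le> 2 * mu / (1 - mu * Lmax m N A) * Tlam m N A y lam q x0" for n
    using descent_partial_sums_le[where T = ?T and D = ?D, OF \<open>0 < c\<close> T_nonneg step, of n]
    by (simp add: c_def T0 mult.commute)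
  moreover have "(\<lambda>n. sqrt (\<Sum>j<N. (x n j - x (Suc n) j)\<^sup>2)) \<longlonglongrightarrow> 0"
    using tendsto_real_sqrt[OF descent_tendsto_zero[where T = ?T and D = ?D, OF \<open>0 < c\<close> T_nonneg D_nonneg step]]
    by (simp add: power2_commute)
  ultimately show ?thesis by blast
qed

end
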